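(* Let $f$ be a nonconstant harmonic function on $K$ with $f(p_0)=\alpha$, $f(p_1)=\beta$, $f(p_2)=\gamma$. Then the restrictions of $f$ to all three edges $[p_0,p_1]$, $[p_0,p_2]$, $[p_1,p_2]$ are simultaneously strictly monotone if and only if at least one of the equalities $2\alpha=\beta+\gamma$, $2\beta=\alpha+\gamma$, $2\gamma=\alpha+\beta$ holds.
   Context: Let $p_0,p_1,p_2$ be the vertices of a unit equilateral triangle in $\mathbb{R}^2$, $F_i(x)=(x+p_i)/2$, and $K$ the Sierpinski gasket (the attractor of $F_0,F_1,F_2$). Minimal triangles of the graph $G_m$ are the triangles with vertices $F_w(p_0),F_w(p_1),F_w(p_2)$ for words $w$ of length $m$. A continuous $f:K\to\mathbb{R}$ is harmonic if for every $m\ge0$ and every minimal triangle of $G_m$ with vertices $v_i,v_j,v_k$, the value at the midpoint $v_{ij}$ of $[v_i,v_j]$ is $\frac15(2f(v_i)+2f(v_j)+f(v_k))$; such $f$ is uniquely determined by its values at $p_0,p_1,p_2$. Each edge $[p_i,p_j]$ is a straight segment contained in $K$, and monotonicity of the restriction refers to a linear parametrization of the segment. *)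

theory Defs
  imports "HOL-Analysis.Analysis"
begin

definition vtx :: "complex \<Rightarrow> complex \<Rightarrow> complex \<Rightarrow> nat \<Rightarrow> complex" where
  "vtx p0 p1 p2 i = (if i = 0 then p0 else if i = 1 then p1 else p2)"

definition sg_map :: "complex \<Rightarrow> complex \<Rightarrow> complex \<Rightarrow> nat \<Rightarrow> complex \<Rightarrow> complex" where
  "sg_map p0 p1 p2 i x = (x + vtx p0 p1 p2 i) / 2"

fun sg_word :: "complex \<Rightarrow> complex \<Rightarrow> complex \<Rightarrow> nat list \<Rightarrow> complex \<Rightarrow> complex" where
  "sg_word p0 p1 p2 [] = id"
| "sg_word p0 p1 p2 (i # w) = sg_map p0 p1 p2 i \<circ> sg_word p0 p1 p2 w"

text \<open>K is the attractor of F_0, F_1, F_2: a nonempty compact set with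
  K = F_0(K) \<union> F_1(K) \<union> F_2(K) (unique by Hutchinson's theorem).\<close>
definition is_sg_attractor :: "complex \<Rightarrow> complex \<Rightarrow> complex \<Rightarrow> complex set \<Rightarrow> bool" where
  "is_sg_attractor p0 p1 p2 K \<longleftrightarrow> compact K \<and> K \<noteq> {} \<and>
     K = sg_map p0 p1 p2 0 ` K \<union> sg_map p0 p1 p2 1 ` K \<union> sg_map p0 p1 p2 2 ` K"

definition sg_harmonic :: "complex \<Rightarrow> complex \<Rightarrow> complex \<Rightarrow> complex set \<Rightarrow> (complex \<Rightarrow> real) \<Rightarrow> bool" where
  "sg_harmonic p0 p1 p2 K f \<longleftrightarrow> continuous_on K f \<and>
     (\<forall>w i j k. set w \<subseteq> {0,1,2} \<longrightarrow> i \<in> {0,1,2} \<longrightarrow> j \<in> {0,1,2} \<longrightarrow> k \<in> {0,1,2} \<longrightarrow>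
        i \<noteq> j \<longrightarrow> j \<noteq> k \<longrightarrow> i \<noteq> k \<longrightarrow>
        (let v = (\<lambda>l. sg_word p0 p1 p2 w (vtx p0 p1 p2 l)) in
          f ((v i + v j) / 2) = (2 * f (v i) + 2 * f (v j) + f (v k)) / 5))"

definition strict_mono_on_edge :: "(complex \<Rightarrow> real) \<Rightarrow> complex \<Rightarrow> complex \<Rightarrow> bool" where
  "strict_mono_on_edge f a b \<longleftrightarrow>
     strict_mono_on {0..1::real} (\<lambda>t. f (a + complex_of_real t * (b - a))) \<or>
     strict_mono_on {0..1::real} (\<lambda>t. - f (a + complex_of_real t * (b - a)))"

end

theory Submission
  imports Defs
begin

text \<open>On an edge [p_i, p_j] with opposite vertex p_k, write a, b, c for the values of f at
  p_i, p_j, p_k. The restriction of f to the edge is strictly increasing iff a < b and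
  2a - b \<le> c \<le> 2b - a. This condition passes to both half-edges under the 2-2-1/5 rule,
  which gives strict monotonicity on the dyadic points of the edge and, by continuity, on all
  of it. Conversely, on the cells shrinking to p_i the differences to f(p_i) at the two other
  vertices are iterated by a linear map with eigenvalues 3/5 and 1/5, so f can only increase
  away from p_i if b + c \<ge> 2a; symmetrically a + c \<le> 2b at p_j. Imposed on all three
  edges, these inequalities say exactly that one boundary value is the mean of the other two
  and not all three coincide; the latter is excluded by nonconstancy, since a harmonic function
  with equal boundary values is constant.\<close>

text \<open>The arguments are the values at the two ends of an edge and at the opposite vertex.\<close>

definition increasing_edge_values :: "real \<Rightarrow> real \<Rightarrow> real \<Rightarrow> bool" where
  "increasing_edge_values a b c \<longleftrightarrow> a < b \<and> 2 * a - b \<le> c \<and> c \<le> 2 * b - a"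

lemma increasing_edge_values_left:
  "increasing_edge_values a b c \<Longrightarrow>
    increasing_edge_values a ((2 * a + 2 * b + c) / 5) ((2 * a + 2 * c + b) / 5)"
  unfolding increasing_edge_values_def by (auto simp: field_simps)

lemma increasing_edge_values_right:
  "increasing_edge_values a b c \<Longrightarrow>
    increasing_edge_values ((2 * b + 2 * a + c) / 5) b ((2 * b + 2 * c + a) / 5)"
  unfolding increasing_edge_values_def by (auto simp: field_simps)

lemma monotone_edge_values_iff_arith_progression:
  fixes a b c :: real
  shows "(increasing_edge_values a b c \<or> increasing_edge_values (- a) (- b) (- c)) \<and>
    (increasing_edge_values a c b \<or> increasing_edge_values (- a) (- c) (- b)) \<and>
    (increasing_edge_values b c a \<or> increasing_edge_values (- b) (- c) (- a))
    \<longleftrightarrow> (2 * a = b + c \<or> 2 * b = a + c \<or> 2 * c = a + b) \<and> \<not> (a = b \<and> b = c)"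
  unfolding increasing_edge_values_def by linarith

lemma power_affine_pos_imp_nonneg:
  fixes x a b :: real
  assumes "1 < x" and pos: "\<And>n. 0 < x ^ n * a + b"
  shows "0 \<le> a"
proof (rule ccontr)
  assume "\<not> 0 \<le> a"
  then have "a < 0" by simp
  obtain n where "b / - a < x ^ n" using real_arch_pow[OF \<open>1 < x\<close>] by blast
  then have "x ^ n * a + b < 0" using \<open>a < 0\<close> by (simp add: field_simps)
  with pos[of n] show False by simp
qed

lemma closure_dyadics_inter:
  fixes S :: "real set"
  assumes "convex S" "interior S \<noteq> {}" "S \<subseteq> {0..}"
  shows "closure (S \<inter> dyadics) = closure S"
  unfolding dyadics_def by (rule closure_dyadic_rationals_in_convex_set_pos_1) (use assms in auto)

lemma dyadic_between:
  fixes a b :: real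
  assumes "0 \<le> a" "a < b"
  obtains d where "d \<in> dyadics" "a < d" "d < b"
proof -
  have "closure ({a<..<b} \<inter> dyadics) = closure {a<..<b}"
    by (rule closure_dyadics_inter) (use assms in auto)
  then have "{a<..<b} \<inter> dyadics \<noteq> {}" using assms by force
  then show thesis using that by auto
qed

lemma dyadicsE:
  assumes "d \<in> dyadics"
  obtains m n where "d = real m / 2 ^ n"
  using assms unfolding dyadics_def by blast

lemma strict_mono_on_dyadics:
  fixes h :: "real \<Rightarrow> 'a::order"
  assumes step: "\<And>n m. m < 2 ^ n \<Longrightarrow> h (real m / 2 ^ n) < h (real (Suc m) / 2 ^ n)"
  shows "strict_mono_on ({0..1} \<inter> dyadics) h"
proof (rule strict_mono_onI)
  have chain: "h (real m / 2 ^ n) < h (real m' / 2 ^ n)" if "m < m'" "m' \<le> 2 ^ n" for m m' n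
    using that
  proof (induction m')
    case (Suc q)
    show ?case
    proof (cases "m = q")
      case False
      then have "h (real m / 2 ^ n) < h (real q / 2 ^ n)" using Suc by simp
      also have "\<dots> < h (real (Suc q) / 2 ^ n)" using step[of q n] Suc.prems by simp
      finally show ?thesis .
    qed (use step[of q n] Suc.prems in simp)
  qed simp
  fix x y :: real assume x: "x \<in> {0..1} \<inter> dyadics" and y: "y \<in> {0..1} \<inter> dyadics" and "x < y"
  obtain m k where m: "x = real m / 2 ^ k" using x dyadicsE by blast
  obtain q l where q: "y = real q / 2 ^ l" using y dyadicsE by blast
  have x': "x = real (m * 2 ^ l) / 2 ^ (k + l)" and y': "y = real (q * 2 ^ k) / 2 ^ (k + l)"
    unfolding m q by (simp_all add: power_add)
  have "real (m * 2 ^ l) < real (q * 2 ^ k)"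
    using \<open>x < y\<close> unfolding x' y' by (simp add: divide_less_cancel)
  moreover have "real (q * 2 ^ k) \<le> real (2 ^ (k + l))"
    using y unfolding y' by (simp add: divide_le_eq)
  ultimately show "h x < h y"
    unfolding x' y' by (intro chain) (simp_all only: of_nat_less_iff of_nat_le_iff)
qed

lemma strict_mono_on_unit_interval_if_dyadics:
  fixes h :: "real \<Rightarrow> real"
  assumes cont: "continuous_on {0..1} h" and mono: "strict_mono_on ({0..1} \<inter> dyadics) h"
  shows "strict_mono_on {0..1} h"
proof (rule strict_mono_onI)
  fix s t :: real assume s: "s \<in> {0..1}" and t: "t \<in> {0..1}" and "s < t"
  obtain d where d: "d \<in> dyadics" "s < d" "d < t"
    using dyadic_between[of s t] s \<open>s < t\<close> by auto
  have "0 \<le> d" using s d by simp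
  then obtain e where e: "e \<in> dyadics" "d < e" "e < t"
    using dyadic_between[of d t] d by blast
  have "h s \<le> h d"
  proof (rule continuous_le_on_closure[where S = "{0..d} \<inter> dyadics" and f = h])
    have cl: "closure ({0..d} \<inter> dyadics) = {0..d}"
      using closure_dyadics_inter[of "{0..d}"] s d by simp
    show "continuous_on (closure ({0..d} \<inter> dyadics)) h"
      unfolding cl by (rule continuous_on_subset[OF cont]) (use t d in auto)
    show "s \<in> closure ({0..d} \<inter> dyadics)" unfolding cl using s d by simp
    show "h x \<le> h d" if "x \<in> {0..d} \<inter> dyadics" for x
      using that d t strict_mono_onD[OF mono, of x d] by (cases "x = d") auto
  qed
  also have "h d < h e" using strict_mono_onD[OF mono, of d e] s d e t by auto
  also have "h e \<le> h t"
  proof (rule continuous_ge_on_closure[where S = "{e..1} \<inter> dyadics" and f = h])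
    have cl: "closure ({e..1} \<inter> dyadics) = {e..1}"
      using closure_dyadics_inter[of "{e..1}"] s d e t by simp
    show "continuous_on (closure ({e..1} \<inter> dyadics)) h"
      unfolding cl by (rule continuous_on_subset[OF cont]) (use s d e in auto)
    show "t \<in> closure ({e..1} \<inter> dyadics)" unfolding cl using t e by simp
    show "h e \<le> h x" if "x \<in> {e..1} \<inter> dyadics" for x
      using that s d e strict_mono_onD[OF mono, of e x] by (cases "x = e") auto
  qed
  finally show "h s < h t" .
qed

lemma index_triple:
  assumes "{i, j, k} = {0, 1, 2::nat}"
  shows "i \<in> {0, 1, 2}" "j \<in> {0, 1, 2}" "k \<in> {0, 1, 2}" "i \<noteq> j" "j \<noteq> k" "i \<noteq> k"
proof -
  show "i \<in> {0, 1, 2}" "j \<in> {0, 1, 2}" "k \<in> {0, 1, 2}" using assms by blast+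
  have "card {i, j, k} = 3" using assms by simp
  then show "i \<noteq> j" "j \<noteq> k" "i \<noteq> k" by (auto simp: card_insert_if split: if_splits)
qed

locale sg_triangle =
  fixes p0 p1 p2 :: complex
begin

abbreviation vertex :: "nat \<Rightarrow> complex" where
  "vertex \<equiv> vtx p0 p1 p2"

abbreviation word_map :: "nat list \<Rightarrow> complex \<Rightarrow> complex" where
  "word_map \<equiv> sg_word p0 p1 p2"

abbreviation cell_vtx :: "nat list \<Rightarrow> nat \<Rightarrow> complex" where
  "cell_vtx w l \<equiv> word_map w (vertex l)"

lemma word_map_affine: "word_map w x = x / 2 ^ length w + word_map w 0"
  by (induction w) (simp_all add: sg_map_def field_simps)

lemma word_map_append: "word_map (w @ u) = word_map w \<circ> word_map u"
  by (induction w) auto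

lemma word_map_midpoint: "word_map w ((x + y) / 2) = (word_map w x + word_map w y) / 2"
  by (subst (1 2 3) word_map_affine) (simp add: field_simps)

lemma dist_word_map: "dist (word_map w x) (word_map w y) = dist x y / 2 ^ length w"
  by (subst (1 2) word_map_affine)
    (simp add: dist_norm diff_divide_distrib[symmetric] norm_divide norm_power)

lemma word_map_replicate: "word_map (replicate n i) x = vertex i + (x - vertex i) / 2 ^ n"
proof (induction n)
  case (Suc n)
  have "word_map (replicate (Suc n) i) x = (word_map (replicate n i) x + vertex i) / 2"
    by (simp add: sg_map_def)
  then show ?case unfolding Suc.IH by (simp add: field_simps)
qed simp

lemma cell_vtx_snoc: "cell_vtx (w @ [m]) l = (cell_vtx w l + cell_vtx w m) / 2"
  by (simp add: word_map_append sg_map_def word_map_midpoint)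

lemma cell_vtx_snoc_same: "cell_vtx (w @ [l]) l = cell_vtx w l"
  by (simp add: cell_vtx_snoc field_simps)

definition edge_point :: "nat list \<Rightarrow> nat \<Rightarrow> nat \<Rightarrow> real \<Rightarrow> complex" where
  "edge_point w i j t = cell_vtx w i + of_real t * (cell_vtx w j - cell_vtx w i)"

lemma edge_point_left: "edge_point (w @ [i]) i j t = edge_point w i j (t / 2)"
  by (simp add: edge_point_def cell_vtx_snoc field_simps)

lemma edge_point_right: "edge_point (w @ [j]) i j t = edge_point w i j ((1 + t) / 2)"
  by (simp add: edge_point_def cell_vtx_snoc field_simps)

lemma dyadic_edge_induct:
  assumes "Q w"
    and Q_snoc: "\<And>w. Q w \<Longrightarrow> Q (w @ [i]) \<and> Q (w @ [j])"
    and R_cell: "\<And>w. Q w \<Longrightarrow> R (cell_vtx w i) (cell_vtx w j)"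
    and "m < 2 ^ n"
  shows "R (edge_point w i j (real m / 2 ^ n)) (edge_point w i j (real (Suc m) / 2 ^ n))"
  using assms(1,4)
proof (induction n arbitrary: w m)
  case 0
  then show ?case using R_cell by (simp add: edge_point_def)
next
  case (Suc n)
  show ?case
  proof (cases "m < 2 ^ n")
    case True
    have "R (edge_point (w @ [i]) i j (real m / 2 ^ n))
        (edge_point (w @ [i]) i j (real (Suc m) / 2 ^ n))"
      using Suc.IH[OF _ True] Q_snoc[OF Suc.prems(1)] by blast
    then show ?thesis unfolding edge_point_left by (simp add: field_simps)
  next
    case False
    define m' where "m' = m - 2 ^ n"
    have m: "real m = 2 ^ n + real m'" and "m' < 2 ^ n"
      using False Suc.prems(2) by (auto simp: m'_def)
    have "R (edge_point (w @ [j]) i j (real m' / 2 ^ n))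
        (edge_point (w @ [j]) i j (real (Suc m') / 2 ^ n))"
      using Suc.IH[OF _ \<open>m' < 2 ^ n\<close>] Q_snoc[OF Suc.prems(1)] by blast
    then show ?thesis unfolding edge_point_right by (simp add: m field_simps)
  qed
qed

end

locale sg_gasket = sg_triangle +
  fixes K :: "complex set"
  assumes attractor: "is_sg_attractor p0 p1 p2 K"
begin

lemma closed_K: "closed K"
  using attractor compact_imp_closed by (auto simp: is_sg_attractor_def)

lemma sg_map_in_K: "x \<in> K \<Longrightarrow> sg_map p0 p1 p2 i x \<in> K"
proof -
  assume "x \<in> K"
  then have "sg_map p0 p1 p2 i x \<in>
      sg_map p0 p1 p2 0 ` K \<union> sg_map p0 p1 p2 1 ` K \<union> sg_map p0 p1 p2 2 ` K"
    by (cases "i = 0 \<or> i = 1") (auto simp: sg_map_def vtx_def)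
  with attractor show ?thesis unfolding is_sg_attractor_def by blast
qed

lemma word_map_in_K: "x \<in> K \<Longrightarrow> word_map w x \<in> K"
  by (induction w) (auto intro: sg_map_in_K)

lemma vertex_in_K: "vertex i \<in> K"
proof -
  obtain x where "x \<in> K" using attractor by (auto simp: is_sg_attractor_def)
  have "(\<lambda>n. vertex i + (x - vertex i) * (1 / 2) ^ n) \<longlonglongrightarrow> vertex i + (x - vertex i) * 0"
    by (intro tendsto_intros LIMSEQ_power_zero) simp
  then have "(\<lambda>n. word_map (replicate n i) x) \<longlonglongrightarrow> vertex i"
    by (simp add: word_map_replicate power_one_over)
  then show ?thesis
    using closed_K closed_sequentially[of K "\<lambda>n. word_map (replicate n i) x"]
      word_map_in_K[OF \<open>x \<in> K\<close>] by blast
qed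

lemma cell_vtx_in_K: "cell_vtx w l \<in> K"
  by (rule word_map_in_K[OF vertex_in_K])

lemma edge_point_in_K:
  assumes "t \<in> {0..1}"
  shows "edge_point w i j t \<in> K"
proof -
  have "edge_point w i j d \<in> K" if dyadic: "d \<in> {0..1} \<inter> dyadics" for d
  proof -
    obtain m n where d: "d = real m / 2 ^ n" using dyadic dyadicsE by blast
    have "m \<le> 2 ^ n" using dyadic unfolding d by (simp add: divide_le_eq flip: of_nat_le_iff)
    show ?thesis
    proof (cases m)
      case 0
      then show ?thesis using cell_vtx_in_K by (simp add: d edge_point_def)
    next
      case (Suc m')
      have "m' < 2 ^ n" using \<open>m \<le> 2 ^ n\<close> Suc by simp
      then show ?thesis
        using dyadic_edge_induct[where Q = "\<lambda>_. True" and R = "\<lambda>_ y. y \<in> K"] cell_vtx_in_K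
        by (simp add: d Suc)
    qed
  qed
  then have "edge_point w i j ` ({0..1} \<inter> dyadics) \<subseteq> K" by blast
  moreover have "continuous_on (closure ({0..1} \<inter> dyadics)) (edge_point w i j)"
    unfolding edge_point_def by (intro continuous_intros)
  moreover have "closed K" by (fact closed_K)
  ultimately have "edge_point w i j ` closure ({0..1} \<inter> dyadics) \<subseteq> K"
    using image_closure_subset by blast
  moreover have "closure ({0..1} \<inter> dyadics) = {0..1::real}"
    using closure_dyadics_inter[of "{0..1}"] by simp
  ultimately have "edge_point w i j ` {0..1} \<subseteq> K" by simp
  then show ?thesis using assms by blast
qed

lemma attractor_word_decomposition:
  assumes "x \<in> K"
  shows "\<exists>w y. set w \<subseteq> {0, 1, 2} \<and> length w = n \<and> y \<in> K \<and> x = word_map w y"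
proof (induction n)
  case 0
  show ?case using assms by (intro exI[of _ "[]"] exI[of _ x]) simp
next
  case (Suc n)
  then obtain w y where w: "set w \<subseteq> {0, 1, 2}" "length w = n" "y \<in> K" "x = word_map w y"
    by blast
  have "y \<in> sg_map p0 p1 p2 0 ` K \<union> sg_map p0 p1 p2 1 ` K \<union> sg_map p0 p1 p2 2 ` K"
    using attractor \<open>y \<in> K\<close> unfolding is_sg_attractor_def by blast
  then obtain i z where "i \<in> {0, 1, 2}" "z \<in> K" "y = sg_map p0 p1 p2 i z" by blast
  then show ?case
    using w by (intro exI[of _ "w @ [i]"] exI[of _ z]) (auto simp: word_map_append)
qed

lemma attractor_subset_closure_cell_vertices: "K \<subseteq> closure {cell_vtx w 0 | w. set w \<subseteq> {0, 1, 2}}"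
proof
  fix x assume "x \<in> K"
  obtain E where E: "\<And>y. y \<in> K \<Longrightarrow> dist (vertex 0) y \<le> E"
    using attractor compact_imp_bounded bounded_any_center unfolding is_sg_attractor_def by metis
  show "x \<in> closure {cell_vtx w 0 | w. set w \<subseteq> {0, 1, 2}}"
    unfolding closure_approachable
  proof (intro allI impI)
    fix \<epsilon> :: real assume "0 < \<epsilon>"
    obtain n where n: "E / \<epsilon> < 2 ^ n" using real_arch_pow[of 2] by auto
    obtain w y where w: "set w \<subseteq> {0, 1, 2}" "length w = n" "y \<in> K" "x = word_map w y"
      using attractor_word_decomposition[OF \<open>x \<in> K\<close>] by blast
    have "dist (cell_vtx w 0) x = dist (vertex 0) y / 2 ^ n"
      using w by (simp add: dist_word_map)
    also have "\<dots> \<le> E / 2 ^ n" using E[OF \<open>y \<in> K\<close>] by (simp add: divide_right_mono)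
    also have "\<dots> < \<epsilon>" using n \<open>0 < \<epsilon>\<close> by (simp add: field_simps)
    finally show "\<exists>z\<in>{cell_vtx w 0 | w. set w \<subseteq> {0, 1, 2}}. dist z x < \<epsilon>"
      using w by blast
  qed
qed

lemma sg_harmonic_uminus: "sg_harmonic p0 p1 p2 K f \<Longrightarrow> sg_harmonic p0 p1 p2 K (\<lambda>x. - f x)"
  unfolding sg_harmonic_def Let_def by (auto intro: continuous_on_minus)

lemma sg_harmonicD:
  assumes "sg_harmonic p0 p1 p2 K f" and "set w \<subseteq> {0, 1, 2}" and "{i, j, k} = {0, 1, 2}"
  shows "f ((cell_vtx w i + cell_vtx w j) / 2) =
    (2 * f (cell_vtx w i) + 2 * f (cell_vtx w j) + f (cell_vtx w k)) / 5"
  using conjunct2[OF assms(1)[unfolded sg_harmonic_def], rule_format, OF assms(2) index_triple[OF assms(3)]]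
  by (simp add: Let_def)

lemma sg_harmonic_snoc:
  assumes harm: "sg_harmonic p0 p1 p2 K f" and "set w \<subseteq> {0, 1, 2}" and "{i, j, k} = {0, 1, 2}"
  shows "f (cell_vtx (w @ [i]) j) = (2 * f (cell_vtx w i) + 2 * f (cell_vtx w j) + f (cell_vtx w k)) / 5"
proof -
  have "{j, i, k} = {0, 1, 2}" using \<open>{i, j, k} = {0, 1, 2}\<close> by (simp add: insert_commute)
  from sg_harmonicD[OF harm \<open>set w \<subseteq> {0, 1, 2}\<close> this] show ?thesis by (simp add: cell_vtx_snoc)
qed

lemma sg_harmonic_cell_vtx_const:
  assumes harm: "sg_harmonic p0 p1 p2 K f"
    and a: "f (vertex 0) = a" "f (vertex 1) = a" "f (vertex 2) = a"
    and "set w \<subseteq> {0, 1, 2}" "l \<in> {0, 1, 2}"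
  shows "f (cell_vtx w l) = a"
  using assms(5,6)
proof (induction w arbitrary: l rule: rev_induct)
  case Nil
  then show ?case using a by auto
next
  case (snoc m w)
  then have w: "set w \<subseteq> {0, 1, 2}" and m: "m \<in> {0, 1, 2}" by auto
  show ?case
  proof (cases "l = m")
    case True
    then show ?thesis using snoc.IH[OF w snoc.prems(2)] by (simp add: cell_vtx_snoc_same)
  next
    case False
    then have mlk: "{m, l, 3 - l - m} = {0, 1, 2}" using m snoc.prems(2) by auto
    then show ?thesis
      using sg_harmonic_snoc[OF harm w mlk] snoc.IH[OF w] index_triple(1-3)[OF mlk] by simp
  qed
qed

lemma sg_harmonic_const:
  assumes harm: "sg_harmonic p0 p1 p2 K f"
    and "f (vertex 0) = a" "f (vertex 1) = a" "f (vertex 2) = a" and "x \<in> K"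
  shows "f x = a"
proof -
  define S where "S = {cell_vtx w 0 | w. set w \<subseteq> {0, 1, 2}}"
  have "S \<subseteq> K" unfolding S_def using cell_vtx_in_K by blast
  then have "closure S = K"
    using attractor_subset_closure_cell_vertices closure_minimal[OF _ closed_K] unfolding S_def
    by (intro subset_antisym) simp_all
  show ?thesis
  proof (rule continuous_constant_on_closure[of S f a x])
    show "continuous_on (closure S) f" "x \<in> closure S"
      using harm \<open>x \<in> K\<close> \<open>closure S = K\<close> by (simp_all add: sg_harmonic_def)
    show "f y = a" if "y \<in> S" for y
      using that sg_harmonic_cell_vtx_const[OF assms(1-4)] unfolding S_def by auto
  qed
qed

lemma increasing_edge_values_snoc:
  assumes harm: "sg_harmonic p0 p1 p2 K f" and w: "set w \<subseteq> {0, 1, 2}" and ijk: "{i, j, k} = {0, 1, 2}"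
    and inc: "increasing_edge_values (f (cell_vtx w i)) (f (cell_vtx w j)) (f (cell_vtx w k))"
  shows "increasing_edge_values
      (f (cell_vtx (w @ [i]) i)) (f (cell_vtx (w @ [i]) j)) (f (cell_vtx (w @ [i]) k))"
    and "increasing_edge_values
      (f (cell_vtx (w @ [j]) i)) (f (cell_vtx (w @ [j]) j)) (f (cell_vtx (w @ [j]) k))"
proof -
  have perms: "{i, k, j} = {0, 1, 2}" "{j, i, k} = {0, 1, 2}" "{j, k, i} = {0, 1, 2}"
    using ijk by (simp_all add: insert_commute)
  show "increasing_edge_values
      (f (cell_vtx (w @ [i]) i)) (f (cell_vtx (w @ [i]) j)) (f (cell_vtx (w @ [i]) k))"
    using increasing_edge_values_left[OF inc]
    unfolding cell_vtx_snoc_same sg_harmonic_snoc[OF harm w ijk] sg_harmonic_snoc[OF harm w perms(1)] .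
  show "increasing_edge_values
      (f (cell_vtx (w @ [j]) i)) (f (cell_vtx (w @ [j]) j)) (f (cell_vtx (w @ [j]) k))"
    using increasing_edge_values_right[OF inc]
    unfolding cell_vtx_snoc_same sg_harmonic_snoc[OF harm w perms(2)] sg_harmonic_snoc[OF harm w perms(3)] .
qed

lemma edge_increasing_if_increasing_edge_values:
  assumes harm: "sg_harmonic p0 p1 p2 K f" and ijk: "{i, j, k} = {0, 1, 2}"
    and inc: "increasing_edge_values (f (vertex i)) (f (vertex j)) (f (vertex k))"
  shows "strict_mono_on {0..1} (\<lambda>t. f (edge_point [] i j t))"
proof (rule strict_mono_on_unit_interval_if_dyadics[OF _ strict_mono_on_dyadics])
  have "continuous_on K f" using harm by (simp add: sg_harmonic_def)
  moreover have "continuous_on {0..1} (edge_point [] i j)"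
    unfolding edge_point_def by (intro continuous_intros)
  moreover have "edge_point [] i j ` {0..1} \<subseteq> K" using edge_point_in_K by blast
  ultimately show "continuous_on {0..1} (\<lambda>t. f (edge_point [] i j t))"
    by (rule continuous_on_compose2)
  define Q where "Q w \<longleftrightarrow> set w \<subseteq> {0, 1, 2} \<and>
    increasing_edge_values (f (cell_vtx w i)) (f (cell_vtx w j)) (f (cell_vtx w k))" for w
  have Q_Nil: "Q []" using inc by (simp add: Q_def)
  have Q_snoc: "Q (w @ [i]) \<and> Q (w @ [j])" if "Q w" for w
    using that increasing_edge_values_snoc[OF harm _ ijk] index_triple[OF ijk] by (simp add: Q_def)
  have Q_cell: "f (cell_vtx w i) < f (cell_vtx w j)" if "Q w" for w
    using that by (simp add: Q_def increasing_edge_values_def)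
  show "f (edge_point [] i j (real m / 2 ^ n)) < f (edge_point [] i j (real (Suc m) / 2 ^ n))"
    if "m < 2 ^ n" for n m
    by (rule dyadic_edge_induct[where Q = Q and R = "\<lambda>x y. f x < f y", OF Q_Nil Q_snoc Q_cell that])
qed

lemma le_average_if_increasing_from_vertex:
  assumes harm: "sg_harmonic p0 p1 p2 K f" and ijk: "{i, j, k} = {0, 1, 2}"
    and increasing: "\<And>n. f (vertex i) < f (cell_vtx (replicate n i) j)"
  shows "2 * f (vertex i) \<le> f (vertex j) + f (vertex k)"
proof -
  define s where "s n = f (cell_vtx (replicate n i) j) - f (vertex i)" for n
  define e where "e n = f (cell_vtx (replicate n i) k) - f (vertex i)" for n
  have w: "set (replicate n i) \<subseteq> {0, 1, 2}" for n
    using index_triple(1)[OF ijk] by (simp add: set_replicate_conv_if)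
  have ikj: "{i, k, j} = {0, 1, 2}" using ijk by (simp add: insert_commute)
  have rep: "replicate (Suc n) i = replicate n i @ [i]" for n by (simp add: replicate_append_same)
  have center: "cell_vtx (replicate n i) i = vertex i" for n by (simp add: word_map_replicate)
  have s_Suc: "s (Suc n) = (2 * s n + e n) / 5" and e_Suc: "e (Suc n) = (2 * e n + s n) / 5" for n
    using sg_harmonic_snoc[OF harm w ijk, of n] sg_harmonic_snoc[OF harm w ikj, of n]
    unfolding s_def e_def rep center by (simp_all add: field_simps)
  txt \<open>s + e and s - e are eigenvectors of the recursion, with eigenvalues 3/5 and 1/5.\<close>
  have closed_form: "2 * 5 ^ n * s n = 3 ^ n * (s 0 + e 0) + (s 0 - e 0) \<and>
      2 * 5 ^ n * e n = 3 ^ n * (s 0 + e 0) - (s 0 - e 0)" for n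
    by (induction n) (simp_all add: s_Suc e_Suc field_simps)
  have "0 \<le> s 0 + e 0"
  proof (rule power_affine_pos_imp_nonneg[of 3])
    fix n
    have "0 < 2 * 5 ^ n * s n" using increasing[of n] by (simp add: s_def)
    then show "0 < 3 ^ n * (s 0 + e 0) + (s 0 - e 0)" using closed_form[of n] by simp
  qed simp
  then show ?thesis by (simp add: s_def e_def)
qed

lemma increasing_edge_values_if_edge_increasing:
  assumes harm: "sg_harmonic p0 p1 p2 K f" and ijk: "{i, j, k} = {0, 1, 2}"
    and mono: "strict_mono_on {0..1} (\<lambda>t. f (edge_point [] i j t))"
  shows "increasing_edge_values (f (vertex i)) (f (vertex j)) (f (vertex k))"
proof -
  have jik: "{j, i, k} = {0, 1, 2}" using ijk by (simp add: insert_commute)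
  have ends: "edge_point [] i j 0 = vertex i" "edge_point [] i j 1 = vertex j"
    by (simp_all add: edge_point_def)
  have near_i: "edge_point [] i j (1 / 2 ^ n) = cell_vtx (replicate n i) j" for n
    by (simp add: edge_point_def word_map_replicate)
  have near_j: "edge_point [] i j (1 - 1 / 2 ^ n) = cell_vtx (replicate n j) i" for n
    by (simp add: edge_point_def word_map_replicate field_simps)
  have dyadic: "0 < (1::real) / 2 ^ n" "(1::real) / 2 ^ n \<le> 1" for n
    by simp_all
  have "f (vertex i) < f (vertex j)"
    using strict_mono_onD[OF mono, of 0 1] by (simp add: ends)
  moreover have "2 * f (vertex i) \<le> f (vertex j) + f (vertex k)"
  proof (rule le_average_if_increasing_from_vertex[OF harm ijk])
    show "f (vertex i) < f (cell_vtx (replicate n i) j)" for n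
      using strict_mono_onD[OF mono, of 0 "1 / 2 ^ n"] dyadic[of n] by (simp add: ends near_i)
  qed
  moreover have "2 * - f (vertex j) \<le> - f (vertex i) + - f (vertex k)"
  proof (rule le_average_if_increasing_from_vertex[OF sg_harmonic_uminus[OF harm] jik])
    show "- f (vertex j) < - f (cell_vtx (replicate n j) i)" for n
      using strict_mono_onD[OF mono, of "1 - 1 / 2 ^ n" 1] dyadic[of n] by (simp add: ends near_j)
  qed
  ultimately show ?thesis unfolding increasing_edge_values_def by linarith
qed

lemma strict_mono_on_edge_iff:
  assumes harm: "sg_harmonic p0 p1 p2 K f" and ijk: "{i, j, k} = {0, 1, 2}"
  shows "strict_mono_on_edge f (vertex i) (vertex j) \<longleftrightarrow>
    increasing_edge_values (f (vertex i)) (f (vertex j)) (f (vertex k)) \<or>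
    increasing_edge_values (- f (vertex i)) (- f (vertex j)) (- f (vertex k))"
proof -
  have "strict_mono_on {0..1} (\<lambda>t. g (edge_point [] i j t)) \<longleftrightarrow>
      increasing_edge_values (g (vertex i)) (g (vertex j)) (g (vertex k))"
    if "sg_harmonic p0 p1 p2 K g" for g
    using edge_increasing_if_increasing_edge_values[OF that ijk]
      increasing_edge_values_if_edge_increasing[OF that ijk] by blast
  from this[OF harm] this[OF sg_harmonic_uminus[OF harm]] show ?thesis
    unfolding strict_mono_on_edge_def by (simp add: edge_point_def)
qed

end

theorem theorem4:
  fixes p0 p1 p2 :: complex and K :: "complex set" and f :: "complex \<Rightarrow> real"
    and \<alpha> \<beta> \<gamma> :: real
  assumes tri: "dist p0 p1 = 1" "dist p0 p2 = 1" "dist p1 p2 = 1"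
    and K: "is_sg_attractor p0 p1 p2 K"
    and harm: "sg_harmonic p0 p1 p2 K f"
    and noncst: "\<exists>x\<in>K. \<exists>y\<in>K. f x \<noteq> f y"
    and vals: "f p0 = \<alpha>" "f p1 = \<beta>" "f p2 = \<gamma>"
  shows "(strict_mono_on_edge f p0 p1 \<and> strict_mono_on_edge f p0 p2 \<and> strict_mono_on_edge f p1 p2)
     \<longleftrightarrow> (2 * \<alpha> = \<beta> + \<gamma> \<or> 2 * \<beta> = \<alpha> + \<gamma> \<or> 2 * \<gamma> = \<alpha> + \<beta>)"
proof -
  interpret sg_gasket p0 p1 p2 K by unfold_locales (fact K)
  have v: "vertex 0 = p0" "vertex 1 = p1" "vertex 2 = p2" by (simp_all add: vtx_def)
  have "\<not> (\<alpha> = \<beta> \<and> \<beta> = \<gamma>)"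
  proof
    assume "\<alpha> = \<beta> \<and> \<beta> = \<gamma>"
    then have "f x = \<alpha>" if "x \<in> K" for x
      using sg_harmonic_const[OF harm _ _ _ that] by (simp add: vtx_def vals)
    with noncst show False by auto
  qed
  moreover have "{0, 2, 1} = {0, 1, 2::nat}" "{1, 2, 0} = {0, 1, 2::nat}"
    by (simp_all add: insert_commute)
  ultimately show ?thesis
    using strict_mono_on_edge_iff[OF harm, of 0 1 2] strict_mono_on_edge_iff[OF harm, of 0 2 1]
      strict_mono_on_edge_iff[OF harm, of 1 2 0]
      monotone_edge_values_iff_arith_progression[of \<alpha> \<beta> \<gamma>]
    unfolding v vals by argo
qed

end
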